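(* Let $G$ and $H$ be two connected graphs with $\mathrm{toi}(G)=3$ and $\mathrm{toi}(H)=2$. Then $\mathrm{toi}(G \square H) \geq 3$. Furthermore, equality holds when $G=K_3$ and $H=K_2$. In general, if $H$ is not isomorphic to $K_2$, then $\mathrm{toi}(G \square H) \geq 4$.
   Context: $\mathrm{toi}(G)$ is the maximum $t$ such that $G$ contains a totally odd strong immersion of $K_t$ (an injective map of $V(K_t)$ into $V(G)$ with pairwise edge-disjoint odd paths joining each pair of terminals, no terminal being an interior vertex of any path). $G\square H$ is the Cartesian product: vertex set $V(G)\times V(H)$, with $(g_1,h_1)\sim(g_2,h_2)$ iff ($g_1=g_2$ and $h_1h_2\in E(H)$) or ($h_1=h_2$ and $g_1g_2\in E(G)$). *)

theory Defs
  imports Main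
begin

type_synonym 'a graph = "'a set \<times> 'a set set"

definition verts :: "'a graph \<Rightarrow> 'a set" where "verts G = fst G"
definition edges :: "'a graph \<Rightarrow> 'a set set" where "edges G = snd G"

definition wf_graph :: "'a graph \<Rightarrow> bool" where
  "wf_graph G \<longleftrightarrow> finite (verts G) \<and>
     (\<forall>e\<in>edges G. e \<subseteq> verts G \<and> card e = 2)"

definition is_path :: "'a graph \<Rightarrow> 'a list \<Rightarrow> bool" where
  "is_path G p \<longleftrightarrow> p \<noteq> [] \<and> distinct p \<and> set p \<subseteq> verts G \<and>
     (\<forall>i. Suc i < length p \<longrightarrow> {p ! i, p ! Suc i} \<in> edges G)"

definition path_edges :: "'a list \<Rightarrow> 'a set set" where
  "path_edges p = {{p ! i, p ! Suc i} | i. Suc i < length p}"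

definition interior :: "'a list \<Rightarrow> 'a set" where
  "interior p = set (butlast (tl p))"

definition odd_path :: "'a list \<Rightarrow> bool" where
  "odd_path p \<longleftrightarrow> odd (length p - 1)"

definition connected_graph :: "'a graph \<Rightarrow> bool" where
  "connected_graph G \<longleftrightarrow> verts G \<noteq> {} \<and>
     (\<forall>u\<in>verts G. \<forall>v\<in>verts G. \<exists>p. is_path G p \<and> hd p = u \<and> last p = v)"

text \<open>Totally odd strong immersion of K_t: terminals f 0..f (t-1), and for each pair
  i<j an odd path P i j from f i to f j; paths pairwise edge-disjoint; no terminal is
  an interior vertex of any path.\<close>
definition toi_immersion :: "'a graph \<Rightarrow> nat \<Rightarrow> (nat \<Rightarrow> 'a) \<Rightarrow> (nat \<Rightarrow> nat \<Rightarrow> 'a list) \<Rightarrow> bool" where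
  "toi_immersion G t f P \<longleftrightarrow>
     inj_on f {..<t} \<and> f ` {..<t} \<subseteq> verts G \<and>
     (\<forall>i j. i < j \<and> j < t \<longrightarrow>
        is_path G (P i j) \<and> hd (P i j) = f i \<and> last (P i j) = f j \<and> odd_path (P i j) \<and>
        (\<forall>k<t. f k \<notin> interior (P i j))) \<and>
     (\<forall>i j i' j'. i < j \<and> j < t \<and> i' < j' \<and> j' < t \<and> (i, j) \<noteq> (i', j') \<longrightarrow>
        path_edges (P i j) \<inter> path_edges (P i' j') = {})"

definition has_toi :: "'a graph \<Rightarrow> nat \<Rightarrow> bool" where
  "has_toi G t \<longleftrightarrow> (\<exists>f P. toi_immersion G t f P)"

definition toi :: "'a graph \<Rightarrow> nat" where
  "toi G = Max {t. has_toi G t}"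

definition cart_prod :: "'a graph \<Rightarrow> 'b graph \<Rightarrow> ('a \<times> 'b) graph" where
  "cart_prod G H = (verts G \<times> verts H,
     {{(g, h1), (g, h2)} | g h1 h2. g \<in> verts G \<and> {h1, h2} \<in> edges H} \<union>
     {{(g1, h), (g2, h)} | g1 g2 h. h \<in> verts H \<and> {g1, g2} \<in> edges G})"

definition complete_graph :: "nat \<Rightarrow> nat graph" where
  "complete_graph n = ({..<n}, {{i, j} | i j. i < n \<and> j < n \<and> i \<noteq> j})"

definition graph_iso :: "'a graph \<Rightarrow> 'b graph \<Rightarrow> bool" where
  "graph_iso G H \<longleftrightarrow> (\<exists>f. bij_betw f (verts G) (verts H) \<and>
     (\<forall>u\<in>verts G. \<forall>v\<in>verts G. {u, v} \<in> edges G \<longleftrightarrow> {f u, f v} \<in> edges H))"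

end

theory Submission
  imports Defs
begin

text \<open>A copy of \<open>G\<close> inside \<open>G \<box> H\<close> carries every immersion of \<open>G\<close>, so
  \<open>toi (G \<box> H) \<ge> 3\<close>. Gluing the three odd paths of a totally odd \<open>K\<^sub>3\<close>-immersion gives
  a closed walk of odd length, hence an odd cycle \<open>x\<^sub>0, x\<^sub>1, \<dots>, x\<^sub>2, x\<^sub>0\<close> in \<open>G\<close>;
  a connected \<open>H \<noteq> K\<^sub>2\<close> with an edge contains a path \<open>u v w\<close>. Then the terminals
  \<open>(x\<^sub>0,u), (x\<^sub>1,u), (x\<^sub>1,v), (x\<^sub>2,u)\<close> of \<open>G \<box> H\<close> are joined by six pairwise
  edge-disjoint odd paths, two of them running along the odd cycle in the layers \<open>u\<close> and \<open>v\<close>.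
  Conversely, the triangular prism \<open>K\<^sub>3 \<box> K\<^sub>2\<close> has only 9 edges: six edge-disjoint
  odd paths among four terminals leave at most one pair of terminals non-adjacent, and the
  prism contains no \<open>K\<^sub>4\<close> minus an edge.\<close>

section \<open>Paths as vertex lists\<close>

lemma path_edges_Nil [simp]: "path_edges [] = {}"
  and path_edges_single [simp]: "path_edges [x] = {}"
  by (simp_all add: path_edges_def)

lemma path_edges_Cons_Cons [simp]:
  "path_edges (x # y # zs) = insert {x, y} (path_edges (y # zs))"
proof -
  have zip: "path_edges xs = (\<lambda>(a, b). {a, b}) ` set (zip xs (tl xs))" for xs :: "'a list"
    unfolding path_edges_def set_zip by (cases xs) (auto simp: nth_tl)
  show ?thesis unfolding zip by simp
qed

lemma path_edges_Cons:
  "path_edges (x # ys) = (if ys = [] then {} else insert {x, hd ys} (path_edges ys))"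
  by (cases ys) auto

lemma path_edges_append:
  "xs \<noteq> [] \<Longrightarrow> ys \<noteq> [] \<Longrightarrow>
    path_edges (xs @ ys) = path_edges xs \<union> path_edges ys \<union> {{last xs, hd ys}}"
  by (induction xs rule: induct_list012) (auto simp: path_edges_Cons)

lemma walk_join:
  assumes "xs \<noteq> []" and "ys \<noteq> []" and "last xs = hd ys"
  shows "hd (xs @ tl ys) = hd xs" and "last (xs @ tl ys) = last ys"
    and "length (xs @ tl ys) - 1 = (length xs - 1) + (length ys - 1)"
    and "path_edges (xs @ tl ys) = path_edges xs \<union> path_edges ys"
proof -
  obtain y ys' where ys: "ys = y # ys'" using assms(2) by (cases ys) auto
  show "hd (xs @ tl ys) = hd xs" and "length (xs @ tl ys) - 1 = (length xs - 1) + (length ys - 1)"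
    using assms(1) ys by (auto simp: Suc_le_eq)
  show "last (xs @ tl ys) = last ys" and "path_edges (xs @ tl ys) = path_edges xs \<union> path_edges ys"
    using assms ys by (cases "ys' = []"; auto simp: path_edges_append path_edges_Cons)+
qed

lemma path_edges_rev [simp]: "path_edges (rev xs) = path_edges xs"
proof (induction xs)
  case (Cons x xs)
  then show ?case
    by (cases "xs = []") (auto simp: path_edges_append path_edges_Cons last_rev insert_commute)
qed simp

lemma path_edges_map: "path_edges (map g xs) = (\<lambda>e. g ` e) ` path_edges xs"
  by (induction xs rule: induct_list012) auto

lemma path_edges_subset_set: "e \<in> path_edges xs \<Longrightarrow> e \<subseteq> set xs"
  by (induction xs rule: induct_list012) auto

lemma finite_path_edges [simp]: "finite (path_edges xs)"
  by (induction xs rule: induct_list012) auto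

lemma card_path_edges: "distinct xs \<Longrightarrow> card (path_edges xs) = length xs - 1"
proof (induction xs rule: induct_list012)
  case (3 x y zs)
  then have "{x, y} \<notin> path_edges (y # zs)"
    using path_edges_subset_set[of "{x, y}" "y # zs"] by auto
  then show ?case using 3 by simp
qed auto

lemma is_path_iff_path_edges:
  "is_path G p \<longleftrightarrow> p \<noteq> [] \<and> distinct p \<and> set p \<subseteq> verts G \<and> path_edges p \<subseteq> edges G"
  unfolding is_path_def path_edges_def by blast

lemma is_path_rev [simp]: "is_path G (rev p) \<longleftrightarrow> is_path G p"
  unfolding is_path_iff_path_edges by auto

lemma interior_subset_set: "interior p \<subseteq> set p"
  unfolding interior_def by (cases p) (auto dest: in_set_butlastD)

lemma endpoints_notin_interior:
  assumes "distinct p"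
  shows "hd p \<notin> interior p" and "last p \<notin> interior p"
proof -
  show "hd p \<notin> interior p"
    using assms by (cases p) (auto simp: interior_def dest: in_set_butlastD)
  show "last p \<notin> interior p"
  proof (cases "tl p = []")
    case False
    then have "last p = last (tl p)" by (cases p) auto
    moreover have "distinct (butlast (tl p) @ [last (tl p)])"
      using assms append_butlast_last_id[OF False] by (metis distinct_tl)
    ultimately show ?thesis by (simp add: interior_def)
  qed (simp add: interior_def)
qed

lemma notin_interior:
  "distinct p \<Longrightarrow> x = hd p \<or> x = last p \<or> x \<notin> set p \<Longrightarrow> x \<notin> interior p"
  using endpoints_notin_interior interior_subset_set by fast

lemma interior_map: "interior (map g p) = g ` interior p"
  unfolding interior_def by (simp add: map_butlast[symmetric] map_tl[symmetric])

lemma has_toi_le_card: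
  assumes "finite (verts G)" and "has_toi G t"
  shows "t \<le> card (verts G)"
proof -
  obtain f P where "toi_immersion G t f P" using assms(2) unfolding has_toi_def by blast
  then have "inj_on f {..<t}" and "f ` {..<t} \<subseteq> verts G" unfolding toi_immersion_def by auto
  then show ?thesis using card_inj_on_le[of f "{..<t}" "verts G"] assms(1) by simp
qed

lemma has_toi_0: "has_toi G 0"
  unfolding has_toi_def toi_immersion_def by simp

lemma finite_has_toi: "finite (verts G) \<Longrightarrow> finite {t. has_toi G t}"
  using has_toi_le_card by (fastforce intro: finite_subset[of _ "{..card (verts G)}"])

lemma le_toi: "finite (verts G) \<Longrightarrow> has_toi G t \<Longrightarrow> t \<le> toi G"
  unfolding toi_def by (rule Max_ge) (simp_all add: finite_has_toi)

lemma has_toi_toi: "finite (verts G) \<Longrightarrow> has_toi G (toi G)"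
  unfolding toi_def using finite_has_toi has_toi_0 by (metis (mono_tags) Max_in empty_iff mem_Collect_eq)

lemma has_toi_downward_closed:
  assumes "has_toi G t" and "s \<le> t"
  shows "has_toi G s"
proof -
  obtain f P where "toi_immersion G t f P" using assms(1) unfolding has_toi_def by blast
  then have "toi_immersion G s f P"
    using assms(2) unfolding toi_immersion_def
    by (auto 4 4 intro: inj_on_subset[of f "{..<t}"] dest: order.strict_trans2)
  then show ?thesis unfolding has_toi_def by blast
qed

lemma toi_eqI:
  assumes "finite (verts G)" and "has_toi G t" and "\<not> has_toi G (Suc t)"
  shows "toi G = t"
  using assms le_toi has_toi_toi has_toi_downward_closed
  by (metis Suc_leI antisym not_le)

lemma is_path_map:
  assumes "inj g" and "g ` verts G \<subseteq> verts G'" and "\<And>a b. {a, b} \<in> edges G \<Longrightarrow> {g a, g b} \<in> edges G'"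
    and "is_path G p"
  shows "is_path G' (map g p)"
  using assms unfolding is_path_def by (auto simp: distinct_map inj_on_subset[OF assms(1) subset_UNIV]) blast

lemma toi_immersion_map:
  assumes "inj g" and "g ` verts G \<subseteq> verts G'" and "\<And>a b. {a, b} \<in> edges G \<Longrightarrow> {g a, g b} \<in> edges G'"
    and "toi_immersion G t f P"
  shows "toi_immersion G' t (g \<circ> f) (\<lambda>i j. map g (P i j))"
proof -
  have path: "is_path G' (map g p)" if "is_path G p" for p
    using is_path_map[OF assms(1-3) that] .
  have "path_edges (map g p) \<inter> path_edges (map g q) = {}"
    if "path_edges p \<inter> path_edges q = {}" for p q
  proof -
    have "inj (\<lambda>e. g ` e)" using assms(1) by (simp add: inj_def inj_image_eq_iff)
    then show ?thesis using that unfolding path_edges_map by (simp add: image_Int[symmetric])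
  qed
  moreover have "inj_on (g \<circ> f) {..<t}"
    using assms(4) unfolding toi_immersion_def by (simp add: inj_on_def inj_eq[OF assms(1)])
  moreover have "(g \<circ> f) ` {..<t} \<subseteq> verts G'"
    using assms(2,4) unfolding toi_immersion_def by (auto simp: image_subset_iff)
  moreover have "P i j \<noteq> []" if "i < j" "j < t" for i j
    using assms(4) that unfolding toi_immersion_def is_path_def by blast
  ultimately show ?thesis
    using assms(4) path unfolding toi_immersion_def odd_path_def interior_map
    by (auto simp: hd_map last_map inj_image_mem_iff[OF assms(1)])
qed

lemma has_toi_map:
  assumes "inj g" and "g ` verts G \<subseteq> verts G'" and "\<And>a b. {a, b} \<in> edges G \<Longrightarrow> {g a, g b} \<in> edges G'"
    and "has_toi G t"
  shows "has_toi G' t"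
  using assms(4) toi_immersion_map[OF assms(1-3)] unfolding has_toi_def by blast

section \<open>Cartesian products and complete graphs\<close>

lemma wf_graph_edgeD:
  assumes "wf_graph G" and "{a, b} \<in> edges G"
  shows "a \<in> verts G" and "b \<in> verts G" and "a \<noteq> b"
  using assms unfolding wf_graph_def by (auto simp: card_2_iff doubleton_eq_iff)

lemma finite_edges: "wf_graph G \<Longrightarrow> finite (edges G)"
  unfolding wf_graph_def by (meson Pow_iff finite_Pow_iff finite_subset subsetI)

lemma verts_cart_prod [simp]: "verts (cart_prod G H) = verts G \<times> verts H"
  by (simp add: cart_prod_def verts_def)

lemma edge_cart_prod_iff:
  "{x, y} \<in> edges (cart_prod G H) \<longleftrightarrow>
     (fst x = fst y \<and> fst x \<in> verts G \<and> {snd x, snd y} \<in> edges H) \<or>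
     (snd x = snd y \<and> snd x \<in> verts H \<and> {fst x, fst y} \<in> edges G)"
    (is "_ \<longleftrightarrow> ?fibre \<or> ?layer")
proof
  assume "{x, y} \<in> edges (cart_prod G H)"
  then consider g h1 h2 where "{x, y} = {(g, h1), (g, h2)}" "g \<in> verts G" "{h1, h2} \<in> edges H"
    | g1 g2 h where "{x, y} = {(g1, h), (g2, h)}" "h \<in> verts H" "{g1, g2} \<in> edges G"
    unfolding cart_prod_def edges_def by auto
  then show "?fibre \<or> ?layer"
    by cases (auto simp: doubleton_eq_iff insert_commute)
next
  assume "?fibre \<or> ?layer"
  then show "{x, y} \<in> edges (cart_prod G H)"
    unfolding cart_prod_def edges_def by (cases x; cases y) force+
qed

lemma edge_cart_prodI1:
  "h \<in> verts H \<Longrightarrow> {a, b} \<in> edges G \<Longrightarrow> {(a, h), (b, h)} \<in> edges (cart_prod G H)"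
  by (simp add: edge_cart_prod_iff)

lemma edges_cart_prod_subset:
  "edges (cart_prod G H) \<subseteq>
     (\<Union>g\<in>verts G. (\<lambda>e. Pair g ` e) ` edges H) \<union> (\<Union>h\<in>verts H. (\<lambda>e. (\<lambda>g. (g, h)) ` e) ` edges G)"
proof
  fix e assume "e \<in> edges (cart_prod G H)"
  then consider g h1 h2 where "e = Pair g ` {h1, h2}" "g \<in> verts G" "{h1, h2} \<in> edges H"
    | g1 g2 h where "e = (\<lambda>g. (g, h)) ` {g1, g2}" "h \<in> verts H" "{g1, g2} \<in> edges G"
    unfolding cart_prod_def edges_def by auto
  then show "e \<in> (\<Union>g\<in>verts G. (\<lambda>e. Pair g ` e) ` edges H) \<union> (\<Union>h\<in>verts H. (\<lambda>e. (\<lambda>g. (g, h)) ` e) ` edges G)"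
    by cases blast+
qed

lemma wf_graph_cart_prod:
  assumes "wf_graph G" and "wf_graph H"
  shows "wf_graph (cart_prod G H)"
proof -
  have "e \<subseteq> verts G \<times> verts H \<and> card e = 2" if "e \<in> edges (cart_prod G H)" for e
    using that assms edges_cart_prod_subset[of G H] unfolding wf_graph_def
    by (fastforce simp: card_image inj_on_def)
  then show ?thesis using assms unfolding wf_graph_def by simp
qed

lemma card_edges_cart_prod_le:
  assumes "wf_graph G" and "wf_graph H"
  shows "card (edges (cart_prod G H)) \<le> card (verts G) * card (edges H) + card (verts H) * card (edges G)"
proof -
  have fin: "finite (verts G)" "finite (verts H)" "finite (edges G)" "finite (edges H)"
    using assms finite_edges[OF assms(1)] finite_edges[OF assms(2)] by (auto simp: wf_graph_def)
  have "card (edges (cart_prod G H)) \<le>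
      card ((\<Union>g\<in>verts G. (\<lambda>e. Pair g ` e) ` edges H) \<union> (\<Union>h\<in>verts H. (\<lambda>e. (\<lambda>g. (g, h)) ` e) ` edges G))"
    using fin by (intro card_mono edges_cart_prod_subset) auto
  also have "\<dots> \<le> (\<Sum>g\<in>verts G. card ((\<lambda>e. Pair g ` e) ` edges H)) +
      (\<Sum>h\<in>verts H. card ((\<lambda>e. (\<lambda>g. (g, h)) ` e) ` edges G))"
    by (intro order.trans[OF card_Un_le] add_mono card_UN_le fin)
  also have "\<dots> \<le> (\<Sum>g\<in>verts G. card (edges H)) + (\<Sum>h\<in>verts H. card (edges G))"
    by (intro add_mono sum_mono card_image_le fin)
  finally show ?thesis by simp
qed

lemma has_toi_cart_prod:
  "h \<in> verts H \<Longrightarrow> has_toi G t \<Longrightarrow> has_toi (cart_prod G H) t"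
  by (rule has_toi_map[where g = "\<lambda>g. (g, h)"]) (auto simp: inj_def edge_cart_prodI1)

lemma verts_complete_graph [simp]: "verts (complete_graph n) = {..<n}"
  by (simp add: complete_graph_def verts_def)

lemma edges_complete_graph: "edges (complete_graph n) = {e. e \<subseteq> {..<n} \<and> card e = 2}"
  unfolding complete_graph_def edges_def by (auto simp: card_2_iff)

lemma wf_graph_complete_graph: "wf_graph (complete_graph n)"
  unfolding wf_graph_def edges_complete_graph by simp

lemma card_edges_complete_graph: "card (edges (complete_graph n)) = n choose 2"
  unfolding edges_complete_graph using n_subsets[of "{..<n}" 2] by simp

lemma has_toi_complete_graph: "has_toi (complete_graph n) n"
proof -
  have "toi_immersion (complete_graph n) n id (\<lambda>i j. [i, j])"
    unfolding toi_immersion_def is_path_iff_path_edges edges_complete_graph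
    by (auto simp: odd_path_def interior_def doubleton_eq_iff)
  then show ?thesis unfolding has_toi_def by blast
qed

section \<open>The triangular prism\<close>

lemma odd_sum_at_most_one_large:
  fixes c :: "'i \<Rightarrow> nat"
  assumes "finite S" and "S \<noteq> {}" and odd: "\<And>x. x \<in> S \<Longrightarrow> odd (c x)"
    and small: "sum c S < card S + 4"
  shows "\<exists>y\<in>S. \<forall>x\<in>S - {y}. c x = 1"
proof (rule ccontr)
  assume "\<not> ?thesis"
  then obtain x1 x2 where x: "x1 \<in> S" "x2 \<in> S" "x1 \<noteq> x2" "c x1 \<noteq> 1" "c x2 \<noteq> 1"
    using assms(2) by blast
  have "c x \<ge> 3" if "x \<in> S" "c x \<noteq> 1" for x
    using odd[OF that(1)] that(2) by presburger
  then have "c x1 \<ge> 3" "c x2 \<ge> 3" using x by auto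
  then have "4 \<le> (\<Sum>x\<in>{x1, x2}. c x - 1)" using x(3) by simp
  also have "\<dots> \<le> (\<Sum>x\<in>S. c x - 1)" using x assms(1) by (intro sum_mono2) auto
  also have "\<dots> = sum c S - (\<Sum>x\<in>S. 1)"
    using odd by (intro sum_subtractf_nat) (simp add: odd_pos Suc_leI)
  finally show False using small by simp
qed

lemma toi_immersion_sum_lengths_le:
  assumes "finite (edges G)" and "toi_immersion G t f P"
  shows "(\<Sum>(i, j)\<in>{(i, j). i < j \<and> j < t}. length (P i j) - 1) \<le> card (edges G)"
proof -
  let ?S = "{(i, j). i < j \<and> j < t}"
  let ?E = "\<lambda>(i, j). path_edges (P i j)"
  have fin: "finite ?S" by (rule finite_subset[of _ "{..<t} \<times> {..<t}"]) auto
  have "(\<Sum>(i, j)\<in>?S. length (P i j) - 1) = (\<Sum>ij\<in>?S. card (?E ij))"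
    using assms(2) unfolding toi_immersion_def is_path_def
    by (intro sum.cong) (auto simp: card_path_edges)
  also have "\<dots> = card (\<Union>(?E ` ?S))"
    using assms(2) fin unfolding toi_immersion_def by (intro card_UN_disjoint[symmetric]) auto
  also have "\<dots> \<le> card (edges G)"
    using assms unfolding toi_immersion_def is_path_iff_path_edges
    by (intro card_mono) (simp, blast)
  finally show ?thesis .
qed

lemma path_length_two_edge: "is_path G p \<Longrightarrow> length p = 2 \<Longrightarrow> {hd p, last p} \<in> edges G"
  by (auto simp: is_path_iff_path_edges length_Suc_conv numeral_2_eq_2)

lemma edge_complete_graph_iff: "{i, j} \<in> edges (complete_graph n) \<longleftrightarrow> i < n \<and> j < n \<and> i \<noteq> j"
  unfolding edges_complete_graph by (auto simp: card_2_iff)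

abbreviation triangular_prism :: "(nat \<times> nat) graph" where
  "triangular_prism \<equiv> cart_prod (complete_graph 3) (complete_graph 2)"

lemma edge_triangular_prism_iff:
  "{x, y} \<in> edges triangular_prism \<longleftrightarrow> fst x < 3 \<and> fst y < 3 \<and> snd x < 2 \<and> snd y < 2 \<and>
     (fst x = fst y \<and> snd x \<noteq> snd y \<or> snd x = snd y \<and> fst x \<noteq> fst y)"
  unfolding edge_cart_prod_iff edge_complete_graph_iff by auto

lemma triangular_prism_triangle_in_layer:
  assumes "{a, b} \<in> edges triangular_prism" "{b, c} \<in> edges triangular_prism" "{a, c} \<in> edges triangular_prism"
  shows "snd a = snd b \<and> snd a = snd c"
  using assms unfolding edge_triangular_prism_iff by auto

lemma triangular_prism_diamond_free:
  assumes ab: "{a, b} \<in> edges triangular_prism"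
    and "{a, c} \<in> edges triangular_prism" "{b, c} \<in> edges triangular_prism"
    and "{a, d} \<in> edges triangular_prism" "{b, d} \<in> edges triangular_prism"
  shows "c = d"
proof -
  have "snd a = snd b" "snd c = snd a" "snd d = snd a"
    using assms triangular_prism_triangle_in_layer by metis+
  moreover from this have "fst c = fst d"
    using assms unfolding edge_triangular_prism_iff by auto
  ultimately show ?thesis by (simp add: prod_eq_iff)
qed

lemma triangular_prism_immersion_almost_complete:
  assumes imm: "toi_immersion triangular_prism 4 f P"
  obtains p q where "p < q" and "q < 4"
    and "\<And>i j. i < j \<Longrightarrow> j < 4 \<Longrightarrow> (i, j) \<noteq> (p, q) \<Longrightarrow> {f i, f j} \<in> edges triangular_prism"
proof -
  define S where "S = {(i, j). i < j \<and> j < (4::nat)}"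
  have S: "S = {(0, 1), (0, 2), (0, 3), (1, 2), (1, 3), (2, 3)}"
    unfolding S_def by (auto simp: numeral_eq_Suc less_Suc_eq)
  have wf: "wf_graph triangular_prism"
    by (intro wf_graph_cart_prod wf_graph_complete_graph)
  have nine: "card (edges triangular_prism) \<le> 9"
    using card_edges_cart_prod_le[OF wf_graph_complete_graph wf_graph_complete_graph, of 3 2]
    by (simp add: card_edges_complete_graph numeral_eq_Suc)
  define len where "len = (\<lambda>(i, j). length (P i j) - 1)"
  have "sum len S < card S + 4"
    using toi_immersion_sum_lengths_le[OF finite_edges[OF wf] imm] nine
    unfolding len_def S_def[symmetric] by (simp add: S)
  moreover have "odd (len ij)" if "ij \<in> S" for ij
    using imm that unfolding toi_immersion_def odd_path_def S_def len_def by auto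
  ultimately obtain p q where pq: "(p, q) \<in> S" and short: "\<forall>ij\<in>S - {(p, q)}. len ij = 1"
    using odd_sum_at_most_one_large[of S len] by (auto simp: S)
  show ?thesis
  proof (rule that)
    show "p < q" and "q < 4" using pq unfolding S_def by auto
  next
    fix i j assume ij: "i < j" "j < 4" "(i, j) \<noteq> (p, q)"
    then have "length (P i j) - 1 = 1"
      using short[rule_format, of "(i, j)"] unfolding S_def len_def by auto
    then show "{f i, f j} \<in> edges triangular_prism"
      using imm ij path_length_two_edge[of triangular_prism "P i j"]
      unfolding toi_immersion_def by auto
  qed
qed

lemma not_has_toi_4_triangular_prism: "\<not> has_toi triangular_prism 4"
proof
  assume "has_toi triangular_prism 4"
  then obtain f P where imm: "toi_immersion triangular_prism 4 f P" unfolding has_toi_def by blast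
  obtain p q where pq: "p < q" "q < 4" and ordered_edge:
    "\<And>i j. i < j \<Longrightarrow> j < 4 \<Longrightarrow> (i, j) \<noteq> (p, q) \<Longrightarrow> {f i, f j} \<in> edges triangular_prism"
    using triangular_prism_immersion_almost_complete[OF imm] by blast
  have edge: "{f x, f y} \<in> edges triangular_prism"
    if "x < 4" "y < 4" "x \<noteq> y" "{x, y} \<noteq> {p, q}" for x y
    using that ordered_edge[of x y] ordered_edge[of y x]
    by (cases "x < y") (auto simp: insert_commute)
  have "card ({..<4} - {p, q}) = 2" using pq by (auto simp: card_Diff_subset)
  then obtain a b where "{..<4} - {p, q} = {a, b}" and "a \<noteq> b" by (auto simp: card_2_iff)
  then have "f p = f q"
    using pq by (intro triangular_prism_diamond_free[of "f a" "f b"] edge) (auto simp: doubleton_eq_iff)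
  then show False using imm pq unfolding toi_immersion_def by (auto dest: inj_onD)
qed

lemma toi_triangular_prism: "toi triangular_prism = 3"
proof (rule toi_eqI)
  show "has_toi triangular_prism 3"
    by (rule has_toi_cart_prod[of 0]) (auto intro: has_toi_complete_graph)
qed (use not_has_toi_4_triangular_prism in \<open>auto simp: numeral_eq_Suc\<close>)

section \<open>Odd cycles and paths of length two\<close>

definition closed_walk :: "'a graph \<Rightarrow> (nat \<Rightarrow> 'a) \<Rightarrow> nat \<Rightarrow> bool" where
  "closed_walk G w n \<longleftrightarrow> (\<forall>k<n. {w k, w (Suc k)} \<in> edges G) \<and> w 0 = w n"

definition odd_cycle :: "'a graph \<Rightarrow> 'a \<Rightarrow> 'a list \<Rightarrow> bool" where
  "odd_cycle G x R \<longleftrightarrow> is_path G R \<and> odd_path R \<and> x \<notin> set R \<and>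
     {x, hd R} \<in> edges G \<and> {x, last R} \<in> edges G"

lemma closed_walk_segment:
  assumes "closed_walk G w n" and "i < j" and "j \<le> n" and "w i = w j"
  shows "closed_walk G (\<lambda>k. w (i + k)) (j - i)"
  using assms unfolding closed_walk_def by (auto simp: add_Suc_right)

lemma closed_walk_excise:
  assumes "closed_walk G w n" and "i < j" and "j \<le> n" and "w i = w j"
  shows "closed_walk G (\<lambda>k. if k \<le> i then w k else w (k + (j - i))) (n - (j - i))"
  unfolding closed_walk_def
proof (intro conjI allI impI)
  fix k assume "k < n - (j - i)"
  then show "{if k \<le> i then w k else w (k + (j - i)), if Suc k \<le> i then w (Suc k) else w (Suc k + (j - i))}
      \<in> edges G"
    using assms unfolding closed_walk_def
    by (cases "k < i"; cases "k = i") (auto dest: spec[of _ j] spec[of _ "k + (j - i)"])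
qed (use assms in \<open>cases "j = n"; auto simp: closed_walk_def\<close>)

lemma injective_closed_walk_odd_cycle:
  assumes "wf_graph G" and walk: "closed_walk G w n" and inj: "inj_on w {..<n}" and "odd n"
  shows "\<exists>x R. odd_cycle G x R"
proof -
  have edge: "{w k, w (Suc k)} \<in> edges G" if "k < n" for k
    using walk that unfolding closed_walk_def by blast
  have "n \<noteq> 1"
    using edge[of 0] walk wf_graph_edgeD(3)[OF assms(1)] unfolding closed_walk_def by auto
  then have n: "n \<ge> 3" using \<open>odd n\<close> by presburger
  define R where "R = map w [1..<n]"
  have "is_path G R"
    unfolding is_path_def
  proof (intro conjI allI impI)
    show "R \<noteq> []" and "distinct R" using n inj unfolding R_def
      by (auto simp: distinct_map intro: inj_on_subset)
    show "set R \<subseteq> verts G"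
      unfolding R_def using edge wf_graph_edgeD(1)[OF assms(1)] by fastforce
  next
    fix i assume "Suc i < length R"
    then show "{R ! i, R ! Suc i} \<in> edges G" unfolding R_def using edge[of "Suc i"] by simp
  qed
  moreover have "odd_path R" unfolding R_def odd_path_def using \<open>odd n\<close> n by simp
  moreover have "w 0 \<notin> set R"
    using inj n unfolding R_def by (auto dest: inj_onD)
  moreover have "{w 0, hd R} \<in> edges G" and "{w 0, last R} \<in> edges G"
    using n edge[of 0] edge[of "n - 1"] walk unfolding R_def closed_walk_def
    by (auto simp: hd_map last_map insert_commute)
  ultimately show ?thesis unfolding odd_cycle_def by blast
qed

lemma closed_walk_odd_cycle:
  "wf_graph G \<Longrightarrow> closed_walk G w n \<Longrightarrow> odd n \<Longrightarrow> \<exists>x R. odd_cycle G x R"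
proof (induction n arbitrary: w rule: less_induct)
  case (less n)
  show ?case
  proof (cases "inj_on w {..<n}")
    case True
    then show ?thesis using injective_closed_walk_odd_cycle less.prems by blast
  next
    case False
    then obtain i j where ij: "i < j" "j < n" "w i = w j"
      unfolding inj_on_def by (metis lessThan_iff linorder_neqE_nat)
    show ?thesis
    proof (cases "odd (j - i)")
      case True
      then show ?thesis
        using less.IH[of "j - i"] closed_walk_segment[OF less.prems(2) ij(1) _ ij(3)] ij less.prems(1)
        by simp
    next
      case False
      then show ?thesis
        using less.IH[of "n - (j - i)"] closed_walk_excise[OF less.prems(2) ij(1) _ ij(3)] ij less.prems
        by simp
    qed
  qed
qed

lemma closed_walk_nth:
  assumes "path_edges W \<subseteq> edges G" and "W \<noteq> []" and "hd W = last W"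
  shows "closed_walk G ((!) W) (length W - 1)"
proof -
  have "{W ! k, W ! Suc k} \<in> edges G" if "k < length W - 1" for k
    using that by (intro subsetD[OF assms(1)]) (auto simp: path_edges_def)
  then show ?thesis
    using assms(2,3) unfolding closed_walk_def by (simp add: hd_conv_nth last_conv_nth)
qed

lemma has_toi_3_odd_cycle:
  assumes "wf_graph G" and "has_toi G 3"
  shows "\<exists>x R. odd_cycle G x R"
proof -
  obtain f P where imm: "toi_immersion G 3 f P" using assms(2) unfolding has_toi_def by blast
  have path: "is_path G (P i j)" "hd (P i j) = f i" "last (P i j) = f j" "odd (length (P i j) - 1)"
    if "i < j" "j < 3" for i j
    using imm that unfolding toi_immersion_def odd_path_def by auto
  have nonempty: "P i j \<noteq> []" if "i < j" "j < 3" for i j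
    using path(1)[OF that] unfolding is_path_def by blast
  define A where "A = P 0 1 @ tl (P 1 2)"
  define W where "W = A @ tl (rev (P 0 2))"
  have A: "A \<noteq> []" "hd A = f 0" "last A = f 2" "even (length A - 1)"
    "path_edges A = path_edges (P 0 1) \<union> path_edges (P 1 2)"
    unfolding A_def using walk_join[of "P 0 1" "P 1 2"] nonempty path by auto
  have W: "path_edges W \<subseteq> edges G" "W \<noteq> []" "hd W = last W" "odd (length W - 1)"
    unfolding W_def using walk_join[of A "rev (P 0 2)"] A nonempty path
    by (auto simp: last_rev hd_rev is_path_iff_path_edges)
  then show ?thesis
    using closed_walk_odd_cycle[OF assms(1) closed_walk_nth[OF W(1-3)]] by blast
qed

lemma has_toi_2_edge:
  assumes "has_toi G 2"
  obtains a b where "{a, b} \<in> edges G"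
proof -
  obtain f P where imm: "toi_immersion G 2 f P" using assms unfolding has_toi_def by blast
  then have "is_path G (P 0 1)" "hd (P 0 1) \<noteq> last (P 0 1)"
    unfolding toi_immersion_def inj_on_def by (auto simp: numeral_2_eq_2)
  then have "Suc 0 < length (P 0 1)"
    by (cases "P 0 1"; cases "tl (P 0 1)") (auto simp: is_path_def)
  then show ?thesis using that \<open>is_path G (P 0 1)\<close> unfolding is_path_def by blast
qed

lemma graph_iso_complete_graph_2:
  assumes "wf_graph H" and "{a, b} \<in> edges H" and "verts H = {a, b}"
  shows "graph_iso H (complete_graph 2)"
proof -
  define g where "g x = (if x = a then 0 else 1 :: nat)" for x
  have "a \<noteq> b" using wf_graph_edgeD(3)[OF assms(1,2)] .
  then have "bij_betw g (verts H) {..<2}"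
    unfolding assms(3) bij_betw_def g_def by (auto simp: numeral_2_eq_2 lessThan_Suc)
  moreover have "{x, y} \<in> edges H \<longleftrightarrow> {g x, g y} \<in> edges (complete_graph 2)"
    if "x \<in> verts H" "y \<in> verts H" for x y
    using that assms \<open>a \<noteq> b\<close> wf_graph_edgeD(3)[OF assms(1), of x x]
    unfolding edge_complete_graph_iff g_def by (auto simp: insert_commute)
  ultimately show ?thesis unfolding graph_iso_def by auto
qed

lemma walk_into_edge_two_path:
  assumes "path_edges q \<subseteq> edges H" and "q \<noteq> []" and "hd q \<notin> {a, b}" and "last q = a"
    and "{a, b} \<in> edges H"
  shows "\<exists>u v w. {u, v} \<in> edges H \<and> {v, w} \<in> edges H \<and> u \<noteq> w"
  using assms
proof (induction q rule: induct_list012)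
  case (3 x y zs)
  show ?case
  proof (cases "y \<in> {a, b}")
    case True
    have xy: "{x, y} \<in> edges H" "x \<notin> {a, b}" using "3.prems"(1,3) by auto
    from True consider "y = a" | "y = b" by blast
    then show ?thesis
    proof cases
      case 1
      then show ?thesis using xy "3.prems"(5) by blast
    next
      case 2
      then have "{y, a} \<in> edges H" using "3.prems"(5) by (simp add: insert_commute)
      then show ?thesis using xy 2 by blast
    qed
  next
    case False
    have "path_edges (y # zs) \<subseteq> edges H" using "3.prems"(1) by auto
    then show ?thesis using "3.IH"(2) "3.prems"(4,5) False by simp
  qed
qed auto

lemma two_path_if_not_complete_graph_2:
  assumes "wf_graph H" and "connected_graph H" and "{a, b} \<in> edges H"
    and "\<not> graph_iso H (complete_graph 2)"
  shows "\<exists>u v w. {u, v} \<in> edges H \<and> {v, w} \<in> edges H \<and> u \<noteq> w"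
proof -
  have ab: "a \<in> verts H" "b \<in> verts H" using wf_graph_edgeD[OF assms(1,3)] by auto
  then obtain c where c: "c \<in> verts H" "c \<notin> {a, b}"
    using graph_iso_complete_graph_2[OF assms(1,3)] assms(4) by blast
  obtain q where "is_path H q" "hd q = c" "last q = a"
    using assms(2) c(1) ab(1) unfolding connected_graph_def by blast
  then show ?thesis
    using walk_into_edge_two_path[of q H a b] c assms(3) unfolding is_path_iff_path_edges by auto
qed

section \<open>A totally odd \<open>K\<^sub>4\<close>-immersion in the product\<close>

abbreviation layer :: "'b \<Rightarrow> 'a list \<Rightarrow> ('a \<times> 'b) list" where
  "layer h p \<equiv> map (\<lambda>x. (x, h)) p"

lemma is_path_layer: "h \<in> verts H \<Longrightarrow> is_path G p \<Longrightarrow> is_path (cart_prod G H) (layer h p)"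
  by (rule is_path_map) (auto simp: inj_def edge_cart_prodI1)

lemma path_edges_layerD:
  assumes "e \<in> path_edges (layer h p)"
  shows "\<exists>a b. e = {(a, h), (b, h)} \<and> a \<in> set p \<and> b \<in> set p"
proof -
  obtain i where "Suc i < length p" and "e = {(p ! i, h), (p ! Suc i, h)}"
    using assms unfolding path_edges_def by auto
  then show ?thesis by (metis Suc_lessD nth_mem)
qed

lemma path_edges_layer_memD:
  "e \<in> path_edges (layer h p) \<Longrightarrow> z \<in> e \<Longrightarrow> fst z \<in> set p \<and> snd z = h"
  by (drule path_edges_layerD) auto

lemma odd_cycle_distinct:
  assumes "odd_cycle G x R"
  shows "x \<noteq> hd R" and "x \<noteq> last R" and "hd R \<noteq> last R"
proof -
  have R: "distinct R" "R \<noteq> []" "odd (length R - 1)" "x \<notin> set R"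
    using assms unfolding odd_cycle_def is_path_def odd_path_def by auto
  then show "x \<noteq> hd R" and "x \<noteq> last R" by auto
  show "hd R \<noteq> last R"
    using R by (cases R; cases "tl R") (auto simp: hd_conv_nth last_conv_nth)
qed

locale product_K4_immersion =
  fixes G :: "'a graph" and H :: "'b graph" and x0 :: 'a and R :: "'a list" and u v w :: 'b
  assumes wf_G: "wf_graph G" and wf_H: "wf_graph H" and cycle: "odd_cycle G x0 R"
    and uv: "{u, v} \<in> edges H" and vw: "{v, w} \<in> edges H" and u_neq_w: "u \<noteq> w"
begin

definition x1 :: 'a where "x1 = hd R"

definition x2 :: 'a where "x2 = last R"

lemma cycle_facts:
  shows "is_path G R" "odd (length R - 1)" "x0 \<notin> set R" "R \<noteq> []" "hd R = x1" "last R = x2"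
    and "{x0, x1} \<in> edges G" "{x0, x2} \<in> edges G"
  using cycle unfolding odd_cycle_def odd_path_def is_path_def x1_def x2_def by auto

lemma vertices:
  "x0 \<in> verts G" "x1 \<in> verts G" "x2 \<in> verts G" "u \<in> verts H" "v \<in> verts H" "w \<in> verts H"
  using wf_graph_edgeD[OF wf_G cycle_facts(7)] wf_graph_edgeD[OF wf_G cycle_facts(8)]
    wf_graph_edgeD[OF wf_H uv] wf_graph_edgeD[OF wf_H vw] by auto

lemma distinct_vertices: "x0 \<noteq> x1" "x0 \<noteq> x2" "x1 \<noteq> x2" "u \<noteq> v" "v \<noteq> w" "u \<noteq> w"
  using odd_cycle_distinct[OF cycle] wf_graph_edgeD(3)[OF wf_H uv] wf_graph_edgeD(3)[OF wf_H vw]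
    u_neq_w unfolding x1_def x2_def by auto

lemma product_edges:
  "{(x0, u), (x1, u)} \<in> edges (cart_prod G H)" "{(x0, u), (x2, u)} \<in> edges (cart_prod G H)"
  "{(x1, u), (x1, v)} \<in> edges (cart_prod G H)" "{(x0, u), (x0, v)} \<in> edges (cart_prod G H)"
  "{(x0, v), (x2, v)} \<in> edges (cart_prod G H)" "{(x1, v), (x0, v)} \<in> edges (cart_prod G H)"
  "{(x0, v), (x0, w)} \<in> edges (cart_prod G H)" "{(x0, w), (x2, w)} \<in> edges (cart_prod G H)"
  "{(x2, w), (x2, v)} \<in> edges (cart_prod G H)" "{(x2, v), (x2, u)} \<in> edges (cart_prod G H)"
  using cycle_facts(7,8) uv vw vertices by (simp_all add: edge_cart_prod_iff insert_commute)

lemma layer_paths: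
  assumes "h \<in> verts H"
  shows "is_path (cart_prod G H) (layer h R)" and "is_path (cart_prod G H) (layer h (rev R))"
  using is_path_layer[OF assms cycle_facts(1)] is_path_layer[OF assms is_path_rev[THEN iffD2, OF cycle_facts(1)]] .

definition terminal :: "nat \<Rightarrow> 'a \<times> 'b" where
  "terminal = (!) [(x0, u), (x1, u), (x1, v), (x2, u)]"

definition route :: "nat \<Rightarrow> nat \<Rightarrow> ('a \<times> 'b) list" where
  "route i j =
    (if (i, j) = (0, 1) then [(x0, u), (x1, u)]
     else if (i, j) = (0, 2) then (x0, u) # (x0, v) # layer v (rev R)
     else if (i, j) = (0, 3) then [(x0, u), (x2, u)]
     else if (i, j) = (1, 2) then [(x1, u), (x1, v)]
     else if (i, j) = (1, 3) then layer u R
     else [(x1, v), (x0, v), (x0, w), (x2, w), (x2, v), (x2, u)])"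

definition route_ok :: "nat \<Rightarrow> nat \<Rightarrow> bool" where
  "route_ok i j \<longleftrightarrow> is_path (cart_prod G H) (route i j) \<and> hd (route i j) = terminal i \<and>
     last (route i j) = terminal j \<and> odd_path (route i j) \<and> (\<forall>k<4. terminal k \<notin> interior (route i j))"

lemma terminal_simps: "terminal 0 = (x0, u)" "terminal 1 = (x1, u)" "terminal 2 = (x1, v)" "terminal 3 = (x2, u)"
  unfolding terminal_def by simp_all

lemma all_terminals:
  "(\<forall>k<4. terminal k \<notin> A) \<longleftrightarrow> (x0, u) \<notin> A \<and> (x1, u) \<notin> A \<and> (x1, v) \<notin> A \<and> (x2, u) \<notin> A"
  unfolding terminal_def by (auto simp: numeral_eq_Suc less_Suc_eq)

lemma inj_terminal: "inj_on terminal {..<4}"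
  using distinct_vertices unfolding terminal_def by (auto simp: inj_on_def numeral_eq_Suc less_Suc_eq)

lemma terminals_in_product: "terminal ` {..<4} \<subseteq> verts (cart_prod G H)"
  using vertices unfolding terminal_def by (auto simp: numeral_eq_Suc less_Suc_eq)

lemma short_routes_ok: "route_ok 0 1" "route_ok 0 3" "route_ok 1 2" "route_ok 2 3"
  unfolding route_ok_def route_def is_path_iff_path_edges all_terminals terminal_simps odd_path_def
  using product_edges vertices distinct_vertices by (auto simp: interior_def)

lemma route_13_ok: "route_ok 1 3"
proof -
  have dist: "distinct (layer u R)" and ends: "hd (layer u R) = (x1, u)" "last (layer u R) = (x2, u)"
    using layer_paths(1)[OF vertices(4)] cycle_facts(4-6) unfolding is_path_def
    by (auto simp: hd_map last_map)
  have "z \<notin> interior (layer u R)" if "z \<in> {(x0, u), (x1, u), (x1, v), (x2, u)}" for z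
    by (rule notin_interior[OF dist]) (use that ends cycle_facts(3) distinct_vertices in auto)
  then show ?thesis
    unfolding route_ok_def all_terminals terminal_simps
    using layer_paths(1)[OF vertices(4)] ends cycle_facts(2)
    by (simp add: route_def odd_path_def)
qed

lemma route_02_ok: "route_ok 0 2"
proof -
  have L: "path_edges (layer v (rev R)) \<subseteq> edges (cart_prod G H)"
    "set (layer v (rev R)) \<subseteq> verts (cart_prod G H)" "distinct (layer v (rev R))"
    "hd (layer v (rev R)) = (x2, v)" "last (layer v (rev R)) = (x1, v)"
    using layer_paths(2)[OF vertices(5)] cycle_facts(4-6) unfolding is_path_iff_path_edges
    by (auto simp: hd_map hd_rev last_map last_rev)
  have path: "is_path (cart_prod G H) (route 0 2)"
    unfolding route_def is_path_iff_path_edges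
    using L product_edges vertices distinct_vertices cycle_facts(3)
    by (auto simp: path_edges_Cons)
  have ends: "hd (route 0 2) = (x0, u)" "last (route 0 2) = (x1, v)"
    using L(5) cycle_facts(4) by (auto simp: route_def)
  have "z \<notin> interior (route 0 2)" if "z \<in> {(x0, u), (x1, u), (x1, v), (x2, u)}" for z
    by (rule notin_interior)
      (use path that ends cycle_facts(3) distinct_vertices in \<open>auto simp: is_path_def route_def\<close>)
  then show ?thesis
    unfolding route_ok_def all_terminals terminal_simps using path ends cycle_facts(2)
    by (simp add: route_def odd_path_def)
qed

lemma route_ok: "i < j \<Longrightarrow> j < 4 \<Longrightarrow> route_ok i j"
proof -
  assume "i < j" "j < 4"
  then have "(i, j) \<in> {(0, 1), (0, 2), (0, 3), (1, 2), (1, 3), (2, 3)}"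
    by (auto simp: numeral_eq_Suc less_Suc_eq)
  then consider "i = 0" "j = 1" | "i = 0" "j = 2" | "i = 0" "j = 3" | "i = 1" "j = 2"
    | "i = 1" "j = 3" | "i = 2" "j = 3"
    by blast
  then show ?thesis by cases (use short_routes_ok route_13_ok route_02_ok in blast)+
qed

lemma path_edges_route:
  "path_edges (route 0 1) = {{(x0, u), (x1, u)}}" "path_edges (route 0 3) = {{(x0, u), (x2, u)}}"
  "path_edges (route 1 2) = {{(x1, u), (x1, v)}}" "path_edges (route 1 3) = path_edges (layer u R)"
  "path_edges (route 0 2) = {{(x0, u), (x0, v)}, {(x0, v), (x2, v)}} \<union> path_edges (layer v R)"
  "path_edges (route 2 3) = {{(x1, v), (x0, v)}, {(x0, v), (x0, w)}, {(x0, w), (x2, w)},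
     {(x2, w), (x2, v)}, {(x2, v), (x2, u)}}"
proof -
  have "path_edges (layer v (rev R)) = path_edges (layer v R)"
    by (metis path_edges_rev rev_map)
  then show
    "path_edges (route 0 1) = {{(x0, u), (x1, u)}}" "path_edges (route 0 3) = {{(x0, u), (x2, u)}}"
    "path_edges (route 1 2) = {{(x1, u), (x1, v)}}" "path_edges (route 1 3) = path_edges (layer u R)"
    "path_edges (route 0 2) = {{(x0, u), (x0, v)}, {(x0, v), (x2, v)}} \<union> path_edges (layer v R)"
    "path_edges (route 2 3) = {{(x1, v), (x0, v)}, {(x0, v), (x0, w)}, {(x0, w), (x2, w)},
       {(x2, w), (x2, v)}, {(x2, v), (x2, u)}}"
    using cycle_facts(4,6) by (auto simp: route_def path_edges_Cons hd_map hd_rev)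
qed

lemma route_edges_disjoint:
  assumes "i < j" "j < 4" "i' < j'" "j' < 4" "(i, j) \<noteq> (i', j')"
  shows "path_edges (route i j) \<inter> path_edges (route i' j') = {}"
proof -
  have layers_disjoint: "path_edges (layer u R) \<inter> path_edges (layer v R) = {}"
    using distinct_vertices by (blast dest: path_edges_layerD path_edges_layer_memD[OF _ insertI1])
  have disjoint:
    "path_edges (route 0 1) \<inter> path_edges (route 0 2) = {}" "path_edges (route 0 1) \<inter> path_edges (route 0 3) = {}"
    "path_edges (route 0 1) \<inter> path_edges (route 1 2) = {}" "path_edges (route 0 1) \<inter> path_edges (route 1 3) = {}"
    "path_edges (route 0 1) \<inter> path_edges (route 2 3) = {}" "path_edges (route 0 2) \<inter> path_edges (route 0 3) = {}"
    "path_edges (route 0 2) \<inter> path_edges (route 1 2) = {}" "path_edges (route 0 2) \<inter> path_edges (route 1 3) = {}"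
    "path_edges (route 0 2) \<inter> path_edges (route 2 3) = {}" "path_edges (route 0 3) \<inter> path_edges (route 1 2) = {}"
    "path_edges (route 0 3) \<inter> path_edges (route 1 3) = {}" "path_edges (route 0 3) \<inter> path_edges (route 2 3) = {}"
    "path_edges (route 1 2) \<inter> path_edges (route 1 3) = {}" "path_edges (route 1 2) \<inter> path_edges (route 2 3) = {}"
    "path_edges (route 1 3) \<inter> path_edges (route 2 3) = {}"
    unfolding path_edges_route using cycle_facts(3) distinct_vertices layers_disjoint
    by (auto dest: path_edges_layer_memD[OF _ insertI1] path_edges_layer_memD[OF _ insertI2[OF singletonI]])
  have "(i, j) \<in> {(0, 1), (0, 2), (0, 3), (1, 2), (1, 3), (2, 3)}"
    and "(i', j') \<in> {(0, 1), (0, 2), (0, 3), (1, 2), (1, 3), (2, 3)}"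
    using assms by (auto simp: numeral_eq_Suc less_Suc_eq)
  then show ?thesis
    using assms(5) disjoint by (auto simp: Int_commute)
qed

lemma toi_immersion_K4: "toi_immersion (cart_prod G H) 4 terminal route"
  unfolding toi_immersion_def
  using inj_terminal terminals_in_product route_ok[unfolded route_ok_def] route_edges_disjoint
  by simp

end

lemma has_toi_4_cart_prod:
  assumes "wf_graph G" and "wf_graph H" and "odd_cycle G x R"
    and "{u, v} \<in> edges H" and "{v, w} \<in> edges H" and "u \<noteq> w"
  shows "has_toi (cart_prod G H) 4"
  using product_K4_immersion.toi_immersion_K4[OF product_K4_immersion.intro[OF assms]]
  unfolding has_toi_def by blast

theorem mainTheorem7:
  fixes G :: "'a graph" and H :: "'b graph"
  assumes "wf_graph G" and "wf_graph H"
    and "connected_graph G" and "connected_graph H"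
    and "toi G = 3" and "toi H = 2"
  shows "toi (cart_prod G H) \<ge> 3
     \<and> toi (cart_prod (complete_graph 3) (complete_graph 2)) = 3
     \<and> (\<not> graph_iso H (complete_graph 2) \<longrightarrow> toi (cart_prod G H) \<ge> 4)"
proof -
  have fin: "finite (verts G)" "finite (verts H)" "finite (verts (cart_prod G H))"
    using assms(1,2) unfolding wf_graph_def by auto
  have G3: "has_toi G 3" and H2: "has_toi H 2"
    using has_toi_toi[OF fin(1)] has_toi_toi[OF fin(2)] assms(5,6) by simp_all
  obtain h where "h \<in> verts H" using assms(4) unfolding connected_graph_def by blast
  then have "toi (cart_prod G H) \<ge> 3" using le_toi[OF fin(3) has_toi_cart_prod] G3 by blast
  moreover have "toi (cart_prod G H) \<ge> 4" if not_K2: "\<not> graph_iso H (complete_graph 2)"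
  proof -
    obtain a b where "{a, b} \<in> edges H" using has_toi_2_edge[OF H2] .
    then obtain u v w where "{u, v} \<in> edges H" "{v, w} \<in> edges H" "u \<noteq> w"
      using two_path_if_not_complete_graph_2[OF assms(2,4) _ not_K2] by blast
    moreover obtain x R where "odd_cycle G x R" using has_toi_3_odd_cycle[OF assms(1) G3] by blast
    ultimately show ?thesis using le_toi[OF fin(3) has_toi_4_cart_prod[OF assms(1,2)]] by blast
  qed
  ultimately show ?thesis using toi_triangular_prism by blast
qed

end
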